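(* For every split graph $G$, $\eta(G)\leq\chi(G)$, where $\chi(G)$ is the chromatic number of $G$.
   Context: All graphs are finite, simple and undirected. A graph is split if its vertex set can be partitioned into a clique and a stable set. For a vertex $v$, $N(v)$ is its set of neighbours. For a positive integer $k$, $[k]=\{1,\dots,k\}$. For a labeling $f:V(G)\to[k]$ and $S\subseteq V(G)$, $f(S)=\sum_{u\in S}f(u)$. A labeling $f:V(G)\to[k]$ is an additive $k$-coloring if $f(N(u))\neq f(N(v))$ for every edge $(u,v)$ of $G$. The additive chromatic number $\eta(G)$ is the least $k$ for which $G$ has an additive $k$-coloring. *)

theory Defs
  imports Main
begin

definition simple_graph :: "'a set \<Rightarrow> ('a \<Rightarrow> 'a \<Rightarrow> bool) \<Rightarrow> bool" where
  "simple_graph V E \<longleftrightarrow> finite V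
     \<and> (\<forall>u v. E u v \<longrightarrow> u \<in> V \<and> v \<in> V)
     \<and> (\<forall>u v. E u v \<longrightarrow> E v u)
     \<and> (\<forall>u. \<not> E u u)"

definition nbhd :: "'a set \<Rightarrow> ('a \<Rightarrow> 'a \<Rightarrow> bool) \<Rightarrow> 'a \<Rightarrow> 'a set" where
  "nbhd V E v = {u \<in> V. E v u}"

definition is_clique :: "('a \<Rightarrow> 'a \<Rightarrow> bool) \<Rightarrow> 'a set \<Rightarrow> bool" where
  "is_clique E K \<longleftrightarrow> (\<forall>u\<in>K. \<forall>v\<in>K. u \<noteq> v \<longrightarrow> E u v)"

definition is_stable :: "('a \<Rightarrow> 'a \<Rightarrow> bool) \<Rightarrow> 'a set \<Rightarrow> bool" where
  "is_stable E S \<longleftrightarrow> (\<forall>u\<in>S. \<forall>v\<in>S. \<not> E u v)"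

definition split_graph :: "'a set \<Rightarrow> ('a \<Rightarrow> 'a \<Rightarrow> bool) \<Rightarrow> bool" where
  "split_graph V E \<longleftrightarrow> simple_graph V E \<and>
     (\<exists>K S. K \<union> S = V \<and> K \<inter> S = {} \<and> is_clique E K \<and> is_stable E S)"

definition additive_coloring :: "'a set \<Rightarrow> ('a \<Rightarrow> 'a \<Rightarrow> bool) \<Rightarrow> nat \<Rightarrow> ('a \<Rightarrow> nat) \<Rightarrow> bool" where
  "additive_coloring V E k f \<longleftrightarrow> (\<forall>v\<in>V. f v \<in> {1..k})
     \<and> (\<forall>u v. E u v \<longrightarrow> (\<Sum>w\<in>nbhd V E u. f w) \<noteq> (\<Sum>w\<in>nbhd V E v. f w))"

definition additive_chromatic_number :: "'a set \<Rightarrow> ('a \<Rightarrow> 'a \<Rightarrow> bool) \<Rightarrow> nat" where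
  "additive_chromatic_number V E = (LEAST k. k \<ge> 1 \<and> (\<exists>f. additive_coloring V E k f))"

definition proper_coloring :: "'a set \<Rightarrow> ('a \<Rightarrow> 'a \<Rightarrow> bool) \<Rightarrow> nat \<Rightarrow> ('a \<Rightarrow> nat) \<Rightarrow> bool" where
  "proper_coloring V E k f \<longleftrightarrow> (\<forall>v\<in>V. f v \<in> {1..k})
     \<and> (\<forall>u v. E u v \<longrightarrow> f u \<noteq> f v)"

definition chromatic_number :: "'a set \<Rightarrow> ('a \<Rightarrow> 'a \<Rightarrow> bool) \<Rightarrow> nat" where
  "chromatic_number V E = (LEAST k. k \<ge> 1 \<and> (\<exists>f. proper_coloring V E k f))"

end

theory Submission
  imports Defs
begin

text \<open>Let K, S split G and k = \<chi>(G). Label the clique vertices injectively by 1, ..., |K| and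
  every stable vertex by k. With T the total label of K, a clique vertex u has neighbourhood sum
  T - \<ell>(u) + k d(u), where d(u) counts its stable neighbours. Two clique vertices are then
  separated because their labels are distinct elements of [k] and so differ modulo k.
  A stable vertex s sees at most T; it sees exactly T only if it dominates K, in which case
  K + s is a clique and |K| < k. A clique neighbour u of s has d(u) \<ge> 1, hence sum at least T,
  and strictly more than T when s dominates K.\<close>

lemma chromatic_number_attained:
  assumes "simple_graph V E"
  shows "1 \<le> chromatic_number V E \<and> (\<exists>f. proper_coloring V E (chromatic_number V E) f)"
proof -
  have "finite V" and irrefl: "\<And>u. \<not> E u u" and edge_in_V: "\<And>u v. E u v \<Longrightarrow> u \<in> V \<and> v \<in> V"
    using assms unfolding simple_graph_def by blast+
  then obtain h where h: "bij_betw h V {0..<card V}"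
    using ex_bij_betw_finite_nat by blast
  have "proper_coloring V E (max 1 (card V)) (\<lambda>v. h v + 1)"
    unfolding proper_coloring_def
  proof (intro conjI allI impI ballI)
    fix v assume "v \<in> V"
    then have "h v < card V"
      using h by (auto simp: bij_betw_def)
    then show "h v + 1 \<in> {1..max 1 (card V)}"
      by simp
  next
    fix u v assume "E u v"
    then show "h u + 1 \<noteq> h v + 1"
      using h edge_in_V irrefl by (metis add_right_cancel bij_betw_imp_inj_on inj_onD)
  qed
  then have "\<exists>k. 1 \<le> k \<and> (\<exists>f. proper_coloring V E k f)"
    by (intro exI[of _ "max 1 (card V)"]) auto
  then show ?thesis
    unfolding chromatic_number_def by (rule LeastI_ex)
qed

lemma additive_chromatic_number_le:
  assumes "additive_coloring V E k f" and "1 \<le> k"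
  shows "additive_chromatic_number V E \<le> k"
  unfolding additive_chromatic_number_def using assms by (intro Least_le) blast

lemma card_clique_le_colors:
  assumes "proper_coloring V E k f" and "K \<subseteq> V" and "is_clique E K"
  shows "card K \<le> k"
proof -
  have "inj_on f K" and "f ` K \<subseteq> {1..k}"
    using assms unfolding proper_coloring_def is_clique_def inj_on_def by blast+
  then show ?thesis
    using card_inj_on_le[of f K "{1..k}"] by simp
qed

lemma eq_if_cong_mod_in_range:
  fixes a b d e k :: nat
  assumes "a \<in> {1..k}" and "b \<in> {1..k}" and "a + k * d = b + k * e"
  shows "a = b"
proof -
  have "(a - 1) + k * d = (b - 1) + k * e"
    using assms by auto
  then have "(a - 1) mod k = (b - 1) mod k"
    by (metis mod_mult_self2)
  moreover have "a - 1 < k" and "b - 1 < k"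
    using assms by auto
  ultimately show ?thesis
    using assms by auto
qed

lemma finite_imp_inj_on_to_interval_1:
  assumes "finite A"
  obtains c :: "'a \<Rightarrow> nat" where "inj_on c A" and "c ` A \<subseteq> {1..card A}"
proof -
  obtain h where "bij_betw h A {0..<card A}"
    using ex_bij_betw_finite_nat assms by blast
  then have "inj_on (\<lambda>x. h x + 1) A" and "(\<lambda>x. h x + 1) ` A \<subseteq> {1..card A}"
    by (auto simp: bij_betw_def inj_on_def Suc_le_eq dest!: equalityD1)
  then show thesis
    using that by blast
qed

locale split_partition =
  fixes V :: "'a set" and E :: "'a \<Rightarrow> 'a \<Rightarrow> bool" and K S :: "'a set"
  assumes simple: "simple_graph V E"
    and partition: "K \<union> S = V" "K \<inter> S = {}"
    and clique: "is_clique E K"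
    and stable: "is_stable E S"
begin

lemma finite_K: "finite K" and finite_S: "finite S"
  using simple partition unfolding simple_graph_def by auto

lemma nbhd_stable_vertex:
  assumes "s \<in> S"
  shows "nbhd V E s = {u \<in> K. E s u}"
  using assms partition stable unfolding nbhd_def is_stable_def by auto

lemma nbhd_sum_clique_vertex:
  fixes w :: "'a \<Rightarrow> 'b::comm_monoid_add"
  assumes "u \<in> K"
  shows "(\<Sum>x\<in>nbhd V E u. w x) + w u = (\<Sum>x\<in>K. w x) + (\<Sum>x\<in>{s \<in> S. E u s}. w x)"
proof -
  have irrefl: "\<not> E u u"
    using simple unfolding simple_graph_def by blast
  have "nbhd V E u = (K - {u}) \<union> {s \<in> S. E u s}"
    using assms partition clique irrefl unfolding nbhd_def is_clique_def by auto
  moreover have "(K - {u}) \<inter> {s \<in> S. E u s} = {}"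
    using partition by auto
  ultimately have "(\<Sum>x\<in>nbhd V E u. w x) = (\<Sum>x\<in>K - {u}. w x) + (\<Sum>x\<in>{s \<in> S. E u s}. w x)"
    using finite_K finite_S by (simp add: sum.union_disjoint)
  moreover have "(\<Sum>x\<in>K - {u}. w x) + w u = (\<Sum>x\<in>K. w x)"
    using assms finite_K by (simp add: sum.remove add.commute)
  ultimately show ?thesis
    by (metis add.assoc add.commute)
qed

lemma dominating_stable_vertex_card:
  assumes "proper_coloring V E k f" and "s \<in> S" and "\<forall>u\<in>K. E s u"
  shows "card K < k"
proof -
  have "\<And>u v. E u v \<Longrightarrow> E v u"
    using simple unfolding simple_graph_def by blast
  then have "is_clique E (insert s K)"
    using clique assms(3) unfolding is_clique_def by blast
  then have "card (insert s K) \<le> k"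
    using card_clique_le_colors assms(1,2) partition by blast
  moreover have "s \<notin> K"
    using assms(2) partition by blast
  ultimately show ?thesis
    using finite_K by simp
qed

definition split_labeling :: "('a \<Rightarrow> nat) \<Rightarrow> nat \<Rightarrow> 'a \<Rightarrow> nat" where
  "split_labeling c k v = (if v \<in> K then c v else k)"

lemma nbhd_sum_split_labeling_clique:
  assumes "u \<in> K"
  shows "(\<Sum>x\<in>nbhd V E u. split_labeling c k x) + c u
    = (\<Sum>x\<in>K. c x) + k * card {s \<in> S. E u s}"
proof -
  have "(\<Sum>x\<in>K. split_labeling c k x) = (\<Sum>x\<in>K. c x)"
    unfolding split_labeling_def by simp
  moreover have "(\<Sum>x\<in>{s \<in> S. E u s}. split_labeling c k x) = (\<Sum>x\<in>{s \<in> S. E u s}. k)"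
    using partition unfolding split_labeling_def by (intro sum.cong) auto
  ultimately show ?thesis
    using nbhd_sum_clique_vertex[OF assms, of "split_labeling c k"] assms
    unfolding split_labeling_def by simp
qed

lemma nbhd_sum_split_labeling_stable:
  assumes "s \<in> S"
  shows "(\<Sum>x\<in>nbhd V E s. split_labeling c k x) = (\<Sum>x\<in>{u \<in> K. E s u}. c x)"
  unfolding nbhd_stable_vertex[OF assms] split_labeling_def by simp

lemma split_labeling_separates_clique_vertices:
  assumes "u \<in> K" and "v \<in> K" and "c u \<in> {1..k}" and "c v \<in> {1..k}" and "c u \<noteq> c v"
  shows "(\<Sum>x\<in>nbhd V E u. split_labeling c k x) \<noteq> (\<Sum>x\<in>nbhd V E v. split_labeling c k x)"
proof
  assume "(\<Sum>x\<in>nbhd V E u. split_labeling c k x) = (\<Sum>x\<in>nbhd V E v. split_labeling c k x)"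
  then have "c u + k * card {s \<in> S. E v s} = c v + k * card {s \<in> S. E u s}"
    using nbhd_sum_split_labeling_clique[OF assms(1), of c k] nbhd_sum_split_labeling_clique[OF assms(2), of c k]
    by linarith
  then show False
    using eq_if_cong_mod_in_range assms(3-5) by blast
qed

lemma split_labeling_separates_clique_stable:
  assumes "u \<in> K" and "s \<in> S" and "E u s"
    and c_range: "c ` K \<subseteq> {1..card K}" and "card K \<le> k"
    and dominating: "\<forall>v\<in>K. E s v \<Longrightarrow> card K < k"
  shows "(\<Sum>x\<in>nbhd V E u. split_labeling c k x) \<noteq> (\<Sum>x\<in>nbhd V E s. split_labeling c k x)"
proof -
  have "card {s \<in> S. E u s} \<noteq> 0"
    using assms(2,3) finite_S by auto
  then have "(\<Sum>x\<in>K. c x) + k \<le> (\<Sum>x\<in>nbhd V E u. split_labeling c k x) + c u"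
    using nbhd_sum_split_labeling_clique[OF assms(1), of c k] by simp
  moreover have "c u \<le> card K"
    using assms(1) c_range by auto
  ultimately have clique_side: "(\<Sum>x\<in>K. c x) + k \<le> (\<Sum>x\<in>nbhd V E u. split_labeling c k x) + card K"
    by linarith
  show ?thesis
  proof (cases "\<forall>v\<in>K. E s v")
    case True
    then have "{v \<in> K. E s v} = K"
      by auto
    then show ?thesis
      using clique_side dominating[OF True] nbhd_sum_split_labeling_stable[OF assms(2)] by simp
  next
    case False
    then obtain v where "v \<in> K" and "\<not> E s v"
      by blast
    moreover have "c v > 0"
      using \<open>v \<in> K\<close> c_range by fastforce
    ultimately have "(\<Sum>x\<in>{v \<in> K. E s v}. c x) < (\<Sum>x\<in>K. c x)"
      using finite_K by (intro sum_strict_mono2) auto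
    then show ?thesis
      using clique_side \<open>card K \<le> k\<close> nbhd_sum_split_labeling_stable[OF assms(2)] by simp
  qed
qed

lemma additive_coloring_split_labeling:
  assumes "inj_on c K" and "c ` K \<subseteq> {1..card K}" and "1 \<le> k" and "card K \<le> k"
    and dominating: "\<And>s. s \<in> S \<Longrightarrow> \<forall>v\<in>K. E s v \<Longrightarrow> card K < k"
  shows "additive_coloring V E k (split_labeling c k)"
  unfolding additive_coloring_def
proof (intro conjI allI impI ballI)
  have c_range: "c v \<in> {1..k}" if "v \<in> K" for v
    using that assms(2,4) by fastforce
  then show "split_labeling c k v \<in> {1..k}" for v
    using assms(3) unfolding split_labeling_def by simp
  have symm: "E u v \<Longrightarrow> E v u" and irrefl: "\<not> E u u" and edge_in_V: "E u v \<Longrightarrow> u \<in> V \<and> v \<in> V" for u v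
    using simple unfolding simple_graph_def by blast+
  fix u v assume "E u v"
  then consider "u \<in> K" "v \<in> K" | "u \<in> K" "v \<in> S" | "u \<in> S" "v \<in> K"
    using edge_in_V partition stable unfolding is_stable_def by blast
  then show "(\<Sum>x\<in>nbhd V E u. split_labeling c k x) \<noteq> (\<Sum>x\<in>nbhd V E v. split_labeling c k x)"
  proof cases
    case 1
    then show ?thesis
      using split_labeling_separates_clique_vertices c_range \<open>E u v\<close> irrefl assms(1)
      by (metis inj_onD)
  next
    case 2
    then show ?thesis
      using split_labeling_separates_clique_stable \<open>E u v\<close> assms(2,4) dominating by blast
  next
    case 3
    then show ?thesis
      using split_labeling_separates_clique_stable symm[OF \<open>E u v\<close>] assms(2,4) dominating
      by metis
  qed
qed

end

theorem mainTheorem10: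
  fixes V :: "'a set" and E :: "'a \<Rightarrow> 'a \<Rightarrow> bool"
  assumes "split_graph V E"
  shows "additive_chromatic_number V E \<le> chromatic_number V E"
proof -
  obtain K S where "split_partition V E K S"
    using assms unfolding split_graph_def split_partition_def by blast
  then interpret split_partition V E K S .
  define k where "k = chromatic_number V E"
  obtain g where "1 \<le> k" and g: "proper_coloring V E k g"
    using chromatic_number_attained[OF simple] unfolding k_def by blast
  have "card K \<le> k"
    using card_clique_le_colors[OF g _ clique] partition by blast
  obtain c where "inj_on c K" and "c ` K \<subseteq> {1..card K}"
    using finite_imp_inj_on_to_interval_1[OF finite_K] .
  then have "additive_coloring V E k (split_labeling c k)"
    using additive_coloring_split_labeling \<open>1 \<le> k\<close> \<open>card K \<le> k\<close>
      dominating_stable_vertex_card[OF g] by blast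
  then show ?thesis
    using additive_chromatic_number_le \<open>1 \<le> k\<close> unfolding k_def by blast
qed

end
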